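(* Consider the cubic ($p=3$) Gauss–Lobatto element on $[-1,1]$ and real constants $\bar\varepsilon_1,\bar\varepsilon_2,\bar\varepsilon_3$. Define the artificial dissipation matrix $$\mathcal{D}_{AD}=\bar\varepsilon_1(\mathcal{D}_x)^T\mathcal{P}\mathcal{D}_x+\bar\varepsilon_2(\mathcal{D}_x^2)^T\mathcal{P}\mathcal{D}_x^2+\bar\varepsilon_3(\mathcal{D}_x^3)^T\mathcal{P}\mathcal{D}_x^3\in\mathbb{R}^{4\times4}.$$ If $$\bar\varepsilon_1>0,\qquad\bar\varepsilon_2\ge-\frac{\bar\varepsilon_1}{3},\qquad\bar\varepsilon_3\ge-\frac{\bar\varepsilon_1}{45}-\frac{\bar\varepsilon_2}{3},$$ then $\mathcal{D}_{AD}$ is positive semi-definite.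
   Context: For $p=3$ on $[-1,1]$ the Gauss–Lobatto nodes are $-1,-1/\sqrt5,1/\sqrt5,1$ with weights $1/6,5/6,5/6,1/6$; $\mathcal{P}$ is the diagonal matrix of these weights; $\ell_0,\dots,\ell_3$ are the cubic Lagrange basis polynomials on these nodes; $\mathcal{D}_x$ is the $4\times4$ matrix with $(\mathcal{D}_x)_{kj}=\ell_j'(x_k)$, and $\mathcal{D}_x^i$ denotes its $i$-th power, whose $(k,j)$ entry is $\ell_j^{(i)}(x_k)$. *)

theory Defs
  imports "HOL-Analysis.Analysis"
begin

text \<open>Cubic (p = 3) Gauss--Lobatto element on [-1,1]. Indices range over {0..<4};
  4x4 matrices are represented as functions nat => nat => real, only entries with
  indices < 4 being relevant.\<close>

definition gl_node :: "nat \<Rightarrow> real" where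
  "gl_node k = (if k = 0 then -1 else if k = 1 then - 1 / sqrt 5
                else if k = 2 then 1 / sqrt 5 else 1)"

definition gl_weight :: "nat \<Rightarrow> real" where
  "gl_weight k = (if k = 0 \<or> k = 3 then 1/6 else 5/6)"

definition lagr :: "nat \<Rightarrow> real \<Rightarrow> real" where
  "lagr j x = (\<Prod>m\<in>{0..<4} - {j}. (x - gl_node m) / (gl_node j - gl_node m))"

definition Pmat :: "nat \<Rightarrow> nat \<Rightarrow> real" where
  "Pmat k j = (if k = j then gl_weight k else 0)"

definition Dx :: "nat \<Rightarrow> nat \<Rightarrow> real" where
  "Dx k j = deriv (lagr j) (gl_node k)"

definition mmul :: "(nat \<Rightarrow> nat \<Rightarrow> real) \<Rightarrow> (nat \<Rightarrow> nat \<Rightarrow> real) \<Rightarrow> nat \<Rightarrow> nat \<Rightarrow> real" where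
  "mmul A B i j = (\<Sum>l<4. A i l * B l j)"

definition mtrans :: "(nat \<Rightarrow> nat \<Rightarrow> real) \<Rightarrow> nat \<Rightarrow> nat \<Rightarrow> real" where
  "mtrans A i j = A j i"

fun mpow :: "(nat \<Rightarrow> nat \<Rightarrow> real) \<Rightarrow> nat \<Rightarrow> nat \<Rightarrow> nat \<Rightarrow> real" where
  "mpow A 0 = (\<lambda>i j. if i = j then 1 else 0)"
| "mpow A (Suc n) = mmul (mpow A n) A"

definition DAD :: "real \<Rightarrow> real \<Rightarrow> real \<Rightarrow> nat \<Rightarrow> nat \<Rightarrow> real" where
  "DAD e1 e2 e3 i j =
     e1 * mmul (mmul (mtrans (mpow Dx 1)) Pmat) (mpow Dx 1) i j
   + e2 * mmul (mmul (mtrans (mpow Dx 2)) Pmat) (mpow Dx 2) i j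
   + e3 * mmul (mmul (mtrans (mpow Dx 3)) Pmat) (mpow Dx 3) i j"

definition psd4 :: "(nat \<Rightarrow> nat \<Rightarrow> real) \<Rightarrow> bool" where
  "psd4 A \<longleftrightarrow> (\<forall>v :: nat \<Rightarrow> real. (\<Sum>i<4. \<Sum>j<4. v i * A i j * v j) \<ge> 0)"

end

theory Submission
  imports Defs "HOL-Computational_Algebra.Polynomial"
begin

text \<open>Let p be the cubic interpolating v at the Gauss--Lobatto nodes. Lagrange interpolation
  reproduces cubics, so \<open>D\<^sub>x\<^sup>i\<close> maps the nodal values of p to those of its i-th derivative,
  and \<open>v\<^sup>T (D\<^sub>x\<^sup>i)\<^sup>T P D\<^sub>x\<^sup>i v\<close> is the Gauss--Lobatto quadrature of the square of that
  derivative. The rule is exact up to degree 5, so writing \<open>p = c\<^sub>0 + c\<^sub>1 x + c\<^sub>2 x\<^sup>2 + c\<^sub>3 x\<^sup>3\<close>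
  the three quadratures are \<open>2 (c\<^sub>1 + c\<^sub>3)\<^sup>2 + 8/3 c\<^sub>2\<^sup>2 + 8/5 c\<^sub>3\<^sup>2\<close>, \<open>8 c\<^sub>2\<^sup>2 + 24 c\<^sub>3\<^sup>2\<close>
  and \<open>72 c\<^sub>3\<^sup>2\<close>. Hence
  \<open>v\<^sup>T D\<^sub>A\<^sub>D v = 2 \<epsilon>\<^sub>1 (c\<^sub>1 + c\<^sub>3)\<^sup>2 + 8 (\<epsilon>\<^sub>1/3 + \<epsilon>\<^sub>2) c\<^sub>2\<^sup>2 + 8/5 (\<epsilon>\<^sub>1 + 15 \<epsilon>\<^sub>2 + 45 \<epsilon>\<^sub>3) c\<^sub>3\<^sup>2\<close>,
  and the hypotheses say exactly that these three coefficients are nonnegative.\<close>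

lemma sum_lessThan_4: "(\<Sum>k<4::nat. f k) = f 0 + f 1 + f 2 + (f 3 :: 'a :: comm_monoid_add)"
  by (simp add: eval_nat_numeral add.assoc)

lemma gl_node_inj:
  assumes "j < 4" "k < 4" "gl_node j = gl_node k" shows "j = k"
proof -
  have "sqrt 5 \<noteq> (-1::real)"
    using real_sqrt_ge_zero[of 5] by linarith
  with assms show ?thesis
    by (auto simp: gl_node_def less_Suc_eq numeral_eq_Suc field_simps split: if_splits)
qed

definition lagrange_poly :: "nat \<Rightarrow> real poly" where
  "lagrange_poly j = (\<Prod>m\<in>{0..<4} - {j}. smult (1 / (gl_node j - gl_node m)) [:- gl_node m, 1:])"

definition interpolant :: "(nat \<Rightarrow> real) \<Rightarrow> real poly" where
  "interpolant v = (\<Sum>j<4. smult (v j) (lagrange_poly j))"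

lemma poly_lagrange_poly: "poly (lagrange_poly j) = lagr j"
  unfolding lagrange_poly_def lagr_def by (intro ext) (simp add: poly_prod diff_divide_distrib)

lemma degree_lagrange_poly:
  assumes "j < 4" shows "degree (lagrange_poly j) \<le> 3"
proof -
  have linear: "degree (smult c [:- a, 1:]) \<le> 1" for c a :: real
    by (rule order.trans[OF degree_smult_le]) simp
  have "degree (lagrange_poly j)
      \<le> (\<Sum>m\<in>{0..<4} - {j}. degree (smult (1 / (gl_node j - gl_node m)) [:- gl_node m, 1:]))"
    unfolding lagrange_poly_def by (rule degree_prod_sum_le[unfolded o_def]) simp
  also have "\<dots> \<le> (\<Sum>m\<in>{0..<4} - {j}. 1)"
    by (rule sum_mono) (rule linear)
  also have "\<dots> = 3" using assms by simp
  finally show ?thesis .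
qed

lemma lagr_gl_node:
  assumes "j < 4" "k < 4" shows "lagr j (gl_node k) = (if j = k then 1 else 0)"
proof (cases "j = k")
  case True
  have "gl_node j \<noteq> gl_node m" if "m \<in> {0..<4} - {j}" for m
    using gl_node_inj[of j m] assms that by auto
  with True show ?thesis by (simp add: lagr_def)
next
  case False
  with assms show ?thesis by (auto simp: lagr_def intro!: prod_zero bexI[of _ k])
qed

lemma poly_interpolant_gl_node:
  assumes "k < 4" shows "poly (interpolant v) (gl_node k) = v k"
  using assms
  by (simp add: interpolant_def poly_sum poly_lagrange_poly lagr_gl_node if_distrib cong: if_cong)

lemma degree_interpolant: "degree (interpolant v) \<le> 3"
  unfolding interpolant_def
  by (intro degree_sum_le) (auto intro: order.trans[OF degree_smult_le] degree_lagrange_poly)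

lemma interpolant_poly:
  fixes p :: "real poly"
  assumes "degree p < 4" shows "interpolant (\<lambda>j. poly p (gl_node j)) = p"
proof (rule poly_eqI_degree)
  have "inj_on gl_node {..<4}" by (auto intro: inj_onI gl_node_inj)
  then show "card (gl_node ` {..<4}) > degree p"
    and "card (gl_node ` {..<4}) > degree (interpolant (\<lambda>j. poly p (gl_node j)))"
    using assms degree_interpolant[of "\<lambda>j. poly p (gl_node j)"] by (simp_all add: card_image)
qed (auto simp: poly_interpolant_gl_node)

definition mvmul :: "(nat \<Rightarrow> nat \<Rightarrow> real) \<Rightarrow> (nat \<Rightarrow> real) \<Rightarrow> nat \<Rightarrow> real" where
  "mvmul A v i = (\<Sum>j<4. A i j * v j)"

lemma mvmul_cong: "(\<And>j. j < 4 \<Longrightarrow> v j = w j) \<Longrightarrow> mvmul A v i = mvmul A w i"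
  by (simp add: mvmul_def)

lemma mvmul_mmul: "mvmul (mmul A B) v i = mvmul A (mvmul B v) i"
proof -
  have "mvmul (mmul A B) v i = (\<Sum>j<4. \<Sum>l<4. A i l * (B l j * v j))"
    unfolding mvmul_def mmul_def by (simp add: sum_distrib_right mult.assoc)
  also have "\<dots> = (\<Sum>l<4. \<Sum>j<4. A i l * (B l j * v j))" by (rule sum.swap)
  also have "\<dots> = mvmul A (mvmul B v) i" unfolding mvmul_def by (simp add: sum_distrib_left)
  finally show ?thesis .
qed

lemma mvmul_mpow_0:
  assumes "i < 4" shows "mvmul (mpow A 0) v i = v i"
proof -
  have "mvmul (mpow A 0) v i = (\<Sum>j<4. if i = j then v j else 0)"
    unfolding mvmul_def by (intro sum.cong) auto
  with assms show ?thesis by simp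
qed

lemma Dx_eq_pderiv_lagrange_poly: "Dx k j = poly (pderiv (lagrange_poly j)) (gl_node k)"
  unfolding Dx_def poly_lagrange_poly[symmetric] by (rule DERIV_imp_deriv) (rule poly_DERIV)

lemma mvmul_Dx_poly:
  assumes "degree p < 4"
  shows "mvmul Dx (\<lambda>j. poly p (gl_node j)) k = poly (pderiv p) (gl_node k)"
proof -
  have "mvmul Dx (\<lambda>j. poly p (gl_node j)) k
      = poly (pderiv (interpolant (\<lambda>j. poly p (gl_node j)))) (gl_node k)"
    by (simp add: higher_pderiv_sum[of 1, simplified] mvmul_def interpolant_def
        Dx_eq_pderiv_lagrange_poly pderiv_smult poly_sum mult.commute)
  then show ?thesis by (simp add: interpolant_poly assms)
qed

lemma mvmul_mpow_Dx_poly: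
  assumes "degree p < 4" "k < 4"
  shows "mvmul (mpow Dx n) (\<lambda>j. poly p (gl_node j)) k = poly ((pderiv ^^ n) p) (gl_node k)"
  using assms(1)
proof (induction n arbitrary: p)
  case 0
  show ?case using mvmul_mpow_0[OF \<open>k < 4\<close>] by simp
next
  case (Suc n)
  have "mvmul (mpow Dx (Suc n)) (\<lambda>j. poly p (gl_node j)) k
      = mvmul (mpow Dx n) (mvmul Dx (\<lambda>j. poly p (gl_node j))) k"
    by (simp add: mvmul_mmul)
  also have "\<dots> = mvmul (mpow Dx n) (\<lambda>j. poly (pderiv p) (gl_node j)) k"
    by (rule mvmul_cong) (simp add: mvmul_Dx_poly Suc.prems)
  also have "\<dots> = poly ((pderiv ^^ n) (pderiv p)) (gl_node k)"
    using Suc.prems by (intro Suc.IH) (simp add: degree_pderiv)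
  finally show ?case by (simp only: funpow_Suc_right comp_apply)
qed

definition gl_quadrature :: "(real \<Rightarrow> real) \<Rightarrow> real" where
  "gl_quadrature f = (\<Sum>k<4. gl_weight k * f (gl_node k))"

lemma gl_quadrature_monomial:
  assumes "n \<le> 5"
  shows "gl_quadrature (\<lambda>x. x ^ n) = (if even n then 2 / (n + 1) else 0)"
proof -
  have "n = 0 \<or> n = 1 \<or> n = 2 \<or> n = 3 \<or> n = 4 \<or> n = 5" using assms by auto
  moreover have "sqrt 5 ^ 3 = 5 * sqrt (5::real)" "sqrt 5 ^ 4 = (25::real)"
    "sqrt 5 ^ 5 = 25 * sqrt (5::real)"
    by (simp_all add: power_def)
  ultimately show ?thesis
    by (elim disjE) (simp_all add: gl_quadrature_def sum_lessThan_4 gl_node_def gl_weight_def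
        power_divide field_simps)
qed

lemma poly_degree_le_2:
  fixes q :: "'a::comm_semiring_1 poly"
  assumes "degree q \<le> 2"
  shows "poly q x = coeff q 0 + coeff q 1 * x + coeff q 2 * x\<^sup>2"
proof -
  have "poly q x = (\<Sum>i\<le>2. coeff q i * x ^ i)"
    unfolding poly_altdef
    by (rule sum.mono_neutral_left) (auto simp: assms coeff_eq_0)
  then show ?thesis by (simp add: eval_nat_numeral add.assoc)
qed

lemma gl_quadrature_square:
  fixes q :: "real poly"
  assumes "degree q \<le> 2"
  shows "gl_quadrature (\<lambda>x. (poly q x)\<^sup>2)
       = 2 * (coeff q 0 + coeff q 2 / 3)\<^sup>2 + 2/3 * (coeff q 1)\<^sup>2 + 8/45 * (coeff q 2)\<^sup>2"
proof -
  define a b c where "a = coeff q 0" and "b = coeff q 1" and "c = coeff q 2"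
  define M where "M n = gl_quadrature (\<lambda>x. x ^ n)" for n
  have "gl_weight k * (poly q (gl_node k))\<^sup>2
      = a\<^sup>2 * (gl_weight k * gl_node k ^ 0) + 2 * a * b * (gl_weight k * gl_node k ^ 1)
        + (b\<^sup>2 + 2 * a * c) * (gl_weight k * gl_node k ^ 2)
        + 2 * b * c * (gl_weight k * gl_node k ^ 3)
        + c\<^sup>2 * (gl_weight k * gl_node k ^ 4)" for k
    unfolding poly_degree_le_2[OF assms] a_def b_def c_def by algebra
  then have "gl_quadrature (\<lambda>x. (poly q x)\<^sup>2)
      = a\<^sup>2 * M 0 + 2 * a * b * M 1 + (b\<^sup>2 + 2 * a * c) * M 2 + 2 * b * c * M 3 + c\<^sup>2 * M 4"
    by (simp only: M_def gl_quadrature_def sum.distrib sum_distrib_left)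
  also have "\<dots> = 2 * (a + c / 3)\<^sup>2 + 2/3 * b\<^sup>2 + 8/45 * c\<^sup>2"
  proof -
    have moments: "M 0 = 2" "M 1 = 0" "M 2 = 2/3" "M 3 = 0" "M 4 = 2/5"
      using gl_quadrature_monomial[of 0] gl_quadrature_monomial[of 1] gl_quadrature_monomial[of 2]
        gl_quadrature_monomial[of 3] gl_quadrature_monomial[of 4]
      unfolding M_def by simp_all
    show ?thesis unfolding moments by (simp add: power2_eq_square algebra_simps)
  qed
  finally show ?thesis by (simp only: a_def b_def c_def)
qed

lemma gl_quadrature_pderiv_squares:
  fixes p :: "real poly"
  assumes "degree p \<le> 3"
  shows "gl_quadrature (\<lambda>x. (poly (pderiv p) x)\<^sup>2)
           = 2 * (coeff p 1 + coeff p 3)\<^sup>2 + 8/3 * (coeff p 2)\<^sup>2 + 8/5 * (coeff p 3)\<^sup>2"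
    and "gl_quadrature (\<lambda>x. (poly ((pderiv ^^ 2) p) x)\<^sup>2)
           = 8 * (coeff p 2)\<^sup>2 + 24 * (coeff p 3)\<^sup>2"
    and "gl_quadrature (\<lambda>x. (poly ((pderiv ^^ 3) p) x)\<^sup>2) = 72 * (coeff p 3)\<^sup>2"
proof -
  have coeff_high: "coeff p n = 0" if "n > 3" for n
    using assms that by (intro coeff_eq_0) simp
  have pderiv_2: "(pderiv ^^ 2) p = pderiv (pderiv p)"
    and pderiv_3: "(pderiv ^^ 3) p = pderiv (pderiv (pderiv p))"
    by (simp_all add: numeral_2_eq_2 numeral_3_eq_3)
  have "gl_quadrature (\<lambda>x. (poly (pderiv p) x)\<^sup>2)
      = 2 * (coeff p 1 + 3 * coeff p 3 / 3)\<^sup>2 + 2/3 * (2 * coeff p 2)\<^sup>2 + 8/45 * (3 * coeff p 3)\<^sup>2"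
    using assms by (subst gl_quadrature_square)
      (simp_all add: degree_pderiv coeff_pderiv eval_nat_numeral)
  then show "gl_quadrature (\<lambda>x. (poly (pderiv p) x)\<^sup>2)
           = 2 * (coeff p 1 + coeff p 3)\<^sup>2 + 8/3 * (coeff p 2)\<^sup>2 + 8/5 * (coeff p 3)\<^sup>2"
    by (simp add: power_mult_distrib)
  have "gl_quadrature (\<lambda>x. (poly (pderiv (pderiv p)) x)\<^sup>2)
      = 2 * (2 * coeff p 2 + 0 / 3)\<^sup>2 + 2/3 * (6 * coeff p 3)\<^sup>2 + 8/45 * 0\<^sup>2"
    using assms coeff_high by (subst gl_quadrature_square)
      (simp_all add: degree_pderiv coeff_pderiv eval_nat_numeral)
  then show "gl_quadrature (\<lambda>x. (poly ((pderiv ^^ 2) p) x)\<^sup>2)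
      = 8 * (coeff p 2)\<^sup>2 + 24 * (coeff p 3)\<^sup>2"
    by (simp add: pderiv_2 power_mult_distrib)
  have "gl_quadrature (\<lambda>x. (poly (pderiv (pderiv (pderiv p))) x)\<^sup>2)
      = 2 * (6 * coeff p 3 + 0 / 3)\<^sup>2 + 2/3 * 0\<^sup>2 + 8/45 * 0\<^sup>2"
    using assms coeff_high by (subst gl_quadrature_square)
      (simp_all add: degree_pderiv coeff_pderiv eval_nat_numeral)
  then show "gl_quadrature (\<lambda>x. (poly ((pderiv ^^ 3) p) x)\<^sup>2) = 72 * (coeff p 3)\<^sup>2"
    by (simp add: pderiv_3 power_mult_distrib)
qed

lemma quadratic_form_gram:
  "(\<Sum>i<4. \<Sum>j<4. v i * mmul (mmul (mtrans A) Pmat) A i j * v j)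
   = (\<Sum>k<4. gl_weight k * (mvmul A v k)\<^sup>2)"
proof -
  have gram: "mmul (mmul (mtrans A) Pmat) A i j = (\<Sum>l<4. gl_weight l * A l i * A l j)" for i j
  proof -
    have "mmul (mtrans A) Pmat i l = gl_weight l * A l i" if "l < 4" for l
    proof -
      have "mmul (mtrans A) Pmat i l = (\<Sum>m<4. if m = l then gl_weight l * A l i else 0)"
        unfolding mmul_def mtrans_def Pmat_def by (intro sum.cong) auto
      with that show ?thesis by simp
    qed
    then show ?thesis unfolding mmul_def[of "mmul (mtrans A) Pmat"] by (intro sum.cong) auto
  qed
  have "(\<Sum>i<4. \<Sum>j<4. v i * mmul (mmul (mtrans A) Pmat) A i j * v j)
      = (\<Sum>i<4. \<Sum>j<4. \<Sum>l<4. gl_weight l * ((A l i * v i) * (A l j * v j)))"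
    unfolding gram by (simp add: sum_distrib_left sum_distrib_right mult_ac)
  also have "\<dots> = (\<Sum>i<4. \<Sum>l<4. \<Sum>j<4. gl_weight l * ((A l i * v i) * (A l j * v j)))"
    by (rule sum.cong[OF refl], rule sum.swap)
  also have "\<dots> = (\<Sum>l<4. \<Sum>i<4. \<Sum>j<4. gl_weight l * ((A l i * v i) * (A l j * v j)))"
    by (rule sum.swap)
  also have "\<dots> = (\<Sum>l<4. gl_weight l * ((\<Sum>i<4. A l i * v i) * (\<Sum>j<4. A l j * v j)))"
    by (simp only: sum_product, simp only: sum_distrib_left)
  finally show ?thesis unfolding mvmul_def power2_eq_square .
qed

lemma quadratic_form_mpow_Dx:
  "(\<Sum>i<4. \<Sum>j<4. v i * mmul (mmul (mtrans (mpow Dx n)) Pmat) (mpow Dx n) i j * v j)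
   = gl_quadrature (\<lambda>x. (poly ((pderiv ^^ n) (interpolant v)) x)\<^sup>2)"
proof -
  have degree: "degree (interpolant v) < 4"
    using degree_interpolant[of v] by simp
  have "mvmul (mpow Dx n) v k = poly ((pderiv ^^ n) (interpolant v)) (gl_node k)" if "k < 4" for k
  proof -
    have "mvmul (mpow Dx n) v k = mvmul (mpow Dx n) (\<lambda>j. poly (interpolant v) (gl_node j)) k"
      by (rule mvmul_cong) (simp add: poly_interpolant_gl_node)
    also have "\<dots> = poly ((pderiv ^^ n) (interpolant v)) (gl_node k)"
      by (rule mvmul_mpow_Dx_poly[OF degree that])
    finally show ?thesis .
  qed
  then show ?thesis
    unfolding quadratic_form_gram gl_quadrature_def by (intro sum.cong) auto
qed

theorem proposition6:
  fixes e1 e2 e3 :: real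
  assumes "e1 > 0" and "e2 \<ge> - e1 / 3" and "e3 \<ge> - e1 / 45 - e2 / 3"
  shows "psd4 (DAD e1 e2 e3)"
  unfolding psd4_def
proof
  fix v :: "nat \<Rightarrow> real"
  define p where "p = interpolant v"
  define Q where "Q n = gl_quadrature (\<lambda>x. (poly ((pderiv ^^ n) p) x)\<^sup>2)" for n
  have "(\<Sum>i<4. \<Sum>j<4. v i * DAD e1 e2 e3 i j * v j) = e1 * Q 1 + e2 * Q 2 + e3 * Q 3"
    unfolding Q_def p_def quadratic_form_mpow_Dx[symmetric] DAD_def
    by (simp add: algebra_simps sum.distrib sum_distrib_left)
  also have "\<dots> = 2 * e1 * (coeff p 1 + coeff p 3)\<^sup>2 + 8 * (e1 / 3 + e2) * (coeff p 2)\<^sup>2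
                 + 8/5 * (e1 + 15 * e2 + 45 * e3) * (coeff p 3)\<^sup>2"
    using gl_quadrature_pderiv_squares[OF degree_interpolant[of v]]
    unfolding Q_def p_def by (simp add: algebra_simps)
  also have "\<dots> \<ge> 0"
    using assms by (intro add_nonneg_nonneg mult_nonneg_nonneg[OF _ zero_le_power2]) auto
  finally show "(\<Sum>i<4. \<Sum>j<4. v i * DAD e1 e2 e3 i j * v j) \<ge> 0" .
qed

end
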